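(* Let $\boldsymbol{A}\in\mathsf{PSL}$ be finite and $\Phi$ a Sahlqvist quasiequation in the language $\{\land,\lnot,0,1\}$ of $\mathsf{PSL}$. If $\boldsymbol{A}$ validates $\Phi$, then $\boldsymbol{A}^+$ validates $\Phi$.
   Context: $\mathsf{PSL}$: algebras $\langle A;\land,\lnot,0,1\rangle$, $\langle A;\land\rangle$ a semilattice (order $a\le b$ iff $a\land b=a$) with minimum $0$, maximum $1$, and $c\land a=0\iff c\le\lnot a$. Join irreducible element: not the minimum, and whenever $a=b\lor c$ with the join existing, $a=b$ or $a=c$; $\mathsf{J}(\boldsymbol{A})$ is the poset of join irreducibles. For finite $\boldsymbol{A}$, $\boldsymbol{A}^+=\langle\mathsf{Dw}(\mathsf{J}(\boldsymbol{A}));\cap,\lnot,\emptyset,\mathsf{J}(\boldsymbol{A})\rangle$ with $\mathsf{Dw}$ the downsets and $\lnot D=\{a\in\mathsf{J}(\boldsymbol{A}):D\cap{\downarrow}a=\emptyset\}$. Sahlqvist quasiequations: formulas over variables with $\land,\lor,\to,\lnot,0,1$; an occurrence of a variable is positive (negative) if the number of negations and antecedents of implications in whose scope it lies is even (odd); a formula is positive (negative) if all its variable occurrences are. A Sahlqvist antecedent is built from variables, negative formulas, $0,1$ using only $\land,\lor$. A Sahlqvist implication is a positive formula, or $\lnot\varphi$ with $\varphi$ a Sahlqvist antecedent, or $\varphi\to\psi$ with $\varphi$ a Sahlqvist antecedent and $\psi$ positive. A Sahlqvist quasiequation is $\varphi_1\land y\le z\,\&\cdots\&\,\varphi_n\land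 y\le z\Longrightarrow y\le z$ (universally quantified), $y,z$ distinct variables not in the $\varphi_i$, each $\varphi_i$ built from Sahlqvist implications using only $\land,\lor$, and $a\le b$ meaning $a\land b\approx a$. It is in the language of $\mathsf{PSL}$ if only $\land,\lnot,0,1$ occur. *)

theory Defs
  imports Main
begin

datatype fm = Var nat | Meet fm fm | Join fm fm | Imp fm fm | Neg fm | Bot | Top

fun vars :: "fm \<Rightarrow> nat set" where
  "vars (Var x) = {x}"
| "vars (Meet a b) = vars a \<union> vars b"
| "vars (Join a b) = vars a \<union> vars b"
| "vars (Imp a b) = vars a \<union> vars b"
| "vars (Neg a) = vars a"
| "vars Bot = {}"
| "vars Top = {}"

fun in_psl_lang :: "fm \<Rightarrow> bool" where
  "in_psl_lang (Var x) = True"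
| "in_psl_lang (Meet a b) = (in_psl_lang a \<and> in_psl_lang b)"
| "in_psl_lang (Join a b) = False"
| "in_psl_lang (Imp a b) = False"
| "in_psl_lang (Neg a) = in_psl_lang a"
| "in_psl_lang Bot = True"
| "in_psl_lang Top = True"

fun is_pos :: "fm \<Rightarrow> bool" and is_neg :: "fm \<Rightarrow> bool" where
  "is_pos (Var x) = True"
| "is_pos (Meet a b) = (is_pos a \<and> is_pos b)"
| "is_pos (Join a b) = (is_pos a \<and> is_pos b)"
| "is_pos (Imp a b) = (is_neg a \<and> is_pos b)"
| "is_pos (Neg a) = is_neg a"
| "is_pos Bot = True"
| "is_pos Top = True"
| "is_neg (Var x) = False"
| "is_neg (Meet a b) = (is_neg a \<and> is_neg b)"
| "is_neg (Join a b) = (is_neg a \<and> is_neg b)"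
| "is_neg (Imp a b) = (is_pos a \<and> is_neg b)"
| "is_neg (Neg a) = is_pos a"
| "is_neg Bot = True"
| "is_neg Top = True"

inductive sahl_ant :: "fm \<Rightarrow> bool" where
  "sahl_ant (Var x)"
| "is_neg f \<Longrightarrow> sahl_ant f"
| "sahl_ant Bot"
| "sahl_ant Top"
| "sahl_ant a \<Longrightarrow> sahl_ant b \<Longrightarrow> sahl_ant (Meet a b)"
| "sahl_ant a \<Longrightarrow> sahl_ant b \<Longrightarrow> sahl_ant (Join a b)"

inductive sahl_imp :: "fm \<Rightarrow> bool" where
  "is_pos f \<Longrightarrow> sahl_imp f"
| "sahl_ant f \<Longrightarrow> sahl_imp (Neg f)"
| "sahl_ant f \<Longrightarrow> is_pos g \<Longrightarrow> sahl_imp (Imp f g)"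

inductive sahl_comb :: "fm \<Rightarrow> bool" where
  "sahl_imp f \<Longrightarrow> sahl_comb f"
| "sahl_comb a \<Longrightarrow> sahl_comb b \<Longrightarrow> sahl_comb (Meet a b)"
| "sahl_comb a \<Longrightarrow> sahl_comb b \<Longrightarrow> sahl_comb (Join a b)"

text \<open>The quasiequation  phi_1 /\ y <= z & ... & phi_n /\ y <= z ==> y <= z
  is represented by the list phis = [phi_1,...,phi_n] and the variables y, z.\<close>
definition sahlqvist_qe :: "fm list \<Rightarrow> nat \<Rightarrow> nat \<Rightarrow> bool" where
  "sahlqvist_qe phis y z \<longleftrightarrow> y \<noteq> z \<and>
     (\<forall>f\<in>set phis. sahl_comb f \<and> y \<notin> vars f \<and> z \<notin> vars f)"

definition qe_in_psl_lang :: "fm list \<Rightarrow> bool" where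
  "qe_in_psl_lang phis \<longleftrightarrow> (\<forall>f\<in>set phis. in_psl_lang f)"

record 'a psl_alg =
  car :: "'a set"
  mt :: "'a \<Rightarrow> 'a \<Rightarrow> 'a"
  ng :: "'a \<Rightarrow> 'a"
  zr :: "'a"
  on :: "'a"

definition le :: "('a, 'b) psl_alg_scheme \<Rightarrow> 'a \<Rightarrow> 'a \<Rightarrow> bool" where
  "le A a b \<longleftrightarrow> mt A a b = a"

definition psl :: "('a, 'b) psl_alg_scheme \<Rightarrow> bool" where
  "psl A \<longleftrightarrow>
     (\<forall>a\<in>car A. \<forall>b\<in>car A. mt A a b \<in> car A) \<and>
     (\<forall>a\<in>car A. ng A a \<in> car A) \<and> zr A \<in> car A \<and> on A \<in> car A \<and>
     (\<forall>a\<in>car A. mt A a a = a) \<and>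
     (\<forall>a\<in>car A. \<forall>b\<in>car A. mt A a b = mt A b a) \<and>
     (\<forall>a\<in>car A. \<forall>b\<in>car A. \<forall>c\<in>car A. mt A (mt A a b) c = mt A a (mt A b c)) \<and>
     (\<forall>a\<in>car A. le A (zr A) a \<and> le A a (on A)) \<and>
     (\<forall>a\<in>car A. \<forall>c\<in>car A. mt A c a = zr A \<longleftrightarrow> le A c (ng A a))"

definition is_join :: "('a, 'b) psl_alg_scheme \<Rightarrow> 'a \<Rightarrow> 'a \<Rightarrow> 'a \<Rightarrow> bool" where
  "is_join A b c a \<longleftrightarrow> a \<in> car A \<and> le A b a \<and> le A c a \<and>
     (\<forall>u\<in>car A. le A b u \<and> le A c u \<longrightarrow> le A a u)"

definition join_irr :: "('a, 'b) psl_alg_scheme \<Rightarrow> 'a \<Rightarrow> bool" where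
  "join_irr A a \<longleftrightarrow> a \<in> car A \<and> a \<noteq> zr A \<and>
     (\<forall>b\<in>car A. \<forall>c\<in>car A. is_join A b c a \<longrightarrow> a = b \<or> a = c)"

definition JI :: "('a, 'b) psl_alg_scheme \<Rightarrow> 'a set" where
  "JI A = {a. join_irr A a}"

definition downsets :: "('a, 'b) psl_alg_scheme \<Rightarrow> 'a set set" where
  "downsets A = {D. D \<subseteq> JI A \<and> (\<forall>a\<in>D. \<forall>b\<in>JI A. le A b a \<longrightarrow> b \<in> D)}"

definition plus :: "('a, 'b) psl_alg_scheme \<Rightarrow> 'a set psl_alg" where
  "plus A = \<lparr> car = downsets A, mt = (\<inter>),
     ng = (\<lambda>D. {a\<in>JI A. D \<inter> {b\<in>JI A. le A b a} = {}}),
     zr = {}, on = JI A \<rparr>"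

text \<open>Evaluation of formulas of the PSL language (join/implication are not
  interpreted; they never occur in the formulas considered).\<close>
fun eval :: "('a, 'b) psl_alg_scheme \<Rightarrow> (nat \<Rightarrow> 'a) \<Rightarrow> fm \<Rightarrow> 'a" where
  "eval A v (Var x) = v x"
| "eval A v (Meet a b) = mt A (eval A v a) (eval A v b)"
| "eval A v (Neg a) = ng A (eval A v a)"
| "eval A v Bot = zr A"
| "eval A v Top = on A"
| "eval A v (Join a b) = undefined"
| "eval A v (Imp a b) = undefined"

definition validates :: "('a, 'b) psl_alg_scheme \<Rightarrow> fm list \<Rightarrow> nat \<Rightarrow> nat \<Rightarrow> bool" where
  "validates A phis y z \<longleftrightarrow>
     (\<forall>v. (\<forall>x. v x \<in> car A) \<longrightarrow>
        (\<forall>f\<in>set phis. le A (mt A (eval A v f) (v y)) (v z)) \<longrightarrow> le A (v y) (v z))"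

end

(* Let V be a valuation in A^+ satisfying the premises and let j be a join irreducible in V y.
   Whether j lies in the value of a term over meet, negation, 0 and 1 depends only on whether
   j lies in each V x and on which join irreducibles m below j have V x dense below them
   (agree_at).  Every downset has the same such data at j as the principal downset of some a
   in A: of j itself if j is in it, otherwise of the join of its elements below j, which lies
   strictly below j.  If j were below no phi_i(a) for the valuation x |-> a_x, then by join
   irreducibility some w strictly below j would bound all phi_i(a) /\ j, and sending y to j
   and z to w would refute the quasiequation in A.  So j <= phi_i(a) for some i, i.e. j lies
   in phi_i(V), and then in V z by the premises. *)

theory Submission
  imports Defs
begin

definition JI_below :: "('a, 'b) psl_alg_scheme \<Rightarrow> 'a \<Rightarrow> 'a set" where
  "JI_below A a = {k \<in> JI A. le A k a}"

definition is_lub :: "('a, 'b) psl_alg_scheme \<Rightarrow> 'a set \<Rightarrow> 'a \<Rightarrow> bool" where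
  "is_lub A S m \<longleftrightarrow> m \<in> car A \<and> (\<forall>s\<in>S. le A s m) \<and>
     (\<forall>u\<in>car A. (\<forall>s\<in>S. le A s u) \<longrightarrow> le A m u)"

lemma is_join_iff_is_lub: "is_join A b c a \<longleftrightarrow> is_lub A {b, c} a"
  unfolding is_join_def is_lub_def by auto

lemma plus_simps [simp]:
  "car (plus A) = downsets A"
  "mt (plus A) = (\<inter>)"
  "zr (plus A) = {}"
  "on (plus A) = JI A"
  unfolding plus_def by simp_all

lemma ng_plus: "ng (plus A) D = {a \<in> JI A. D \<inter> JI_below A a = {}}"
  unfolding plus_def JI_below_def by simp

lemma le_plus_iff: "le (plus A) D E \<longleftrightarrow> D \<subseteq> E"
  unfolding le_def by auto

lemma JI_in_car: "k \<in> JI A \<Longrightarrow> k \<in> car A"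
  and zr_notin_JI: "zr A \<notin> JI A"
  unfolding JI_def join_irr_def by auto

lemma downsets_subset_JI: "D \<in> downsets A \<Longrightarrow> D \<subseteq> JI A"
  unfolding downsets_def by blast

lemma eval_cong: "\<forall>x\<in>vars t. v x = v' x \<Longrightarrow> eval A v t = eval A v' t"
  by (induction t) auto

locale psl_algebra =
  fixes A :: "('a, 'b) psl_alg_scheme"
  assumes is_psl: "psl A"
begin

lemma mt_closed: "a \<in> car A \<Longrightarrow> b \<in> car A \<Longrightarrow> mt A a b \<in> car A"
  and ng_closed: "a \<in> car A \<Longrightarrow> ng A a \<in> car A"
  and zr_closed: "zr A \<in> car A"
  and on_closed: "on A \<in> car A"
  and mt_idem: "a \<in> car A \<Longrightarrow> mt A a a = a"
  and mt_comm: "a \<in> car A \<Longrightarrow> b \<in> car A \<Longrightarrow> mt A a b = mt A b a"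
  and mt_assoc: "a \<in> car A \<Longrightarrow> b \<in> car A \<Longrightarrow> c \<in> car A \<Longrightarrow>
     mt A (mt A a b) c = mt A a (mt A b c)"
  and zr_le: "a \<in> car A \<Longrightarrow> le A (zr A) a"
  and le_on: "a \<in> car A \<Longrightarrow> le A a (on A)"
  and mt_eq_zr_iff_le_ng: "a \<in> car A \<Longrightarrow> c \<in> car A \<Longrightarrow> mt A c a = zr A \<longleftrightarrow> le A c (ng A a)"
  using is_psl unfolding psl_def by blast+

lemma psl_le_refl: "a \<in> car A \<Longrightarrow> le A a a"
  by (simp add: le_def mt_idem)

lemma psl_le_antisym: "a \<in> car A \<Longrightarrow> b \<in> car A \<Longrightarrow> le A a b \<Longrightarrow> le A b a \<Longrightarrow> a = b"
  by (metis le_def mt_comm)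

lemma psl_le_trans:
  "a \<in> car A \<Longrightarrow> b \<in> car A \<Longrightarrow> c \<in> car A \<Longrightarrow> le A a b \<Longrightarrow> le A b c \<Longrightarrow> le A a c"
  by (metis le_def mt_assoc)

lemma mt_le_left: "a \<in> car A \<Longrightarrow> b \<in> car A \<Longrightarrow> le A (mt A a b) a"
  by (metis le_def mt_assoc mt_comm mt_idem)

lemma mt_le_right: "a \<in> car A \<Longrightarrow> b \<in> car A \<Longrightarrow> le A (mt A a b) b"
  by (metis le_def mt_assoc mt_idem)

lemma le_mt_iff:
  "a \<in> car A \<Longrightarrow> b \<in> car A \<Longrightarrow> c \<in> car A \<Longrightarrow> le A c (mt A a b) \<longleftrightarrow> le A c a \<and> le A c b"
  by (metis le_def mt_assoc mt_closed mt_le_left mt_le_right psl_le_trans)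

lemma le_zr_iff: "a \<in> car A \<Longrightarrow> le A a (zr A) \<longleftrightarrow> a = zr A"
  using psl_le_antisym psl_le_refl zr_closed zr_le by blast

lemma mt_eq_right_iff: "a \<in> car A \<Longrightarrow> b \<in> car A \<Longrightarrow> mt A a b = b \<longleftrightarrow> le A b a"
  by (simp add: le_def mt_comm)

lemma eval_closed: "in_psl_lang t \<Longrightarrow> \<forall>x. v x \<in> car A \<Longrightarrow> eval A v t \<in> car A"
  by (induction t) (auto simp: mt_closed ng_closed zr_closed on_closed)

lemma finite_glb_exists:
  assumes "finite S" "S \<subseteq> car A"
  shows "\<exists>m\<in>car A. (\<forall>s\<in>S. le A m s) \<and> (\<forall>u\<in>car A. (\<forall>s\<in>S. le A u s) \<longrightarrow> le A u m)"
  using assms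
proof (induction S rule: finite_induct)
  case empty
  show ?case using on_closed le_on by blast
next
  case (insert a S)
  then obtain m where m: "m \<in> car A" "\<forall>s\<in>S. le A m s"
    "\<forall>u\<in>car A. (\<forall>s\<in>S. le A u s) \<longrightarrow> le A u m"
    by auto
  have a: "a \<in> car A" using insert.prems by simp
  have "\<forall>s\<in>S. le A (mt A a m) s"
    using insert.prems m mt_le_right[OF a m(1)] psl_le_trans[OF mt_closed[OF a m(1)] m(1)]
    by blast
  then show ?case
    using a m mt_closed[OF a m(1)] mt_le_left[OF a m(1)] le_mt_iff[OF a m(1)] by auto
qed

lemma JI_below_subset_car: "JI_below A a \<subseteq> car A"
  using JI_in_car[of _ A] unfolding JI_below_def by blast

lemma JI_below_refl: "k \<in> JI A \<Longrightarrow> k \<in> JI_below A k"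
  using JI_in_car[of _ A] psl_le_refl unfolding JI_below_def by blast

lemma JI_below_mono: "m \<in> car A \<Longrightarrow> k \<in> JI_below A m \<Longrightarrow> JI_below A k \<subseteq> JI_below A m"
  using JI_in_car[of _ A] psl_le_trans unfolding JI_below_def by blast

lemma JI_below_mono_le: "a \<in> car A \<Longrightarrow> b \<in> car A \<Longrightarrow> le A a b \<Longrightarrow> JI_below A a \<subseteq> JI_below A b"
  using psl_le_trans JI_in_car[of _ A] unfolding JI_below_def by blast

lemma JI_below_in_downsets: "a \<in> car A \<Longrightarrow> JI_below A a \<in> downsets A"
  using JI_in_car[of _ A] psl_le_trans unfolding JI_below_def downsets_def by blast

lemma JI_below_subset_downset: "D \<in> downsets A \<Longrightarrow> k \<in> D \<Longrightarrow> JI_below A k \<subseteq> D"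
  unfolding downsets_def JI_below_def by blast

lemma JI_below_mt: "a \<in> car A \<Longrightarrow> b \<in> car A \<Longrightarrow> JI_below A (mt A a b) = JI_below A a \<inter> JI_below A b"
  using JI_in_car[of _ A] le_mt_iff unfolding JI_below_def by blast

lemma JI_below_zr: "JI_below A (zr A) = {}"
  using JI_in_car[of _ A] le_zr_iff zr_notin_JI unfolding JI_below_def by blast

lemma JI_below_on: "JI_below A (on A) = JI A"
  using JI_in_car[of _ A] le_on unfolding JI_below_def by blast

lemma ng_plus_in_downsets: "ng (plus A) D \<in> downsets A"
  using psl_le_trans JI_in_car[of _ A] unfolding ng_plus downsets_def JI_below_def by blast

lemma eval_plus_in_downsets:
  "in_psl_lang t \<Longrightarrow> \<forall>x. V x \<in> downsets A \<Longrightarrow> eval (plus A) V t \<in> downsets A"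
proof (induction t)
  case (Meet t1 t2)
  then show ?case by (auto simp: downsets_def)
next
  case (Neg t)
  then show ?case by (simp add: ng_plus_in_downsets)
qed (auto simp: downsets_def)

definition dense_below :: "'a set \<Rightarrow> 'a \<Rightarrow> bool" where
  "dense_below D m \<longleftrightarrow> (\<forall>k\<in>JI_below A m. JI_below A k \<inter> D \<noteq> {})"

lemma dense_below_cong:
  assumes "m \<in> car A" "\<forall>k\<in>JI_below A m. k \<in> D \<longleftrightarrow> k \<in> E"
  shows "dense_below D m \<longleftrightarrow> dense_below E m"
  using assms JI_below_mono[OF assms(1)] unfolding dense_below_def by blast

lemma dense_below_Int:
  assumes "D \<in> downsets A" "m \<in> car A"
  shows "dense_below (D \<inter> E) m \<longleftrightarrow> dense_below D m \<and> dense_below E m"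
proof
  assume dense: "dense_below D m \<and> dense_below E m"
  show "dense_below (D \<inter> E) m"
    unfolding dense_below_def
  proof
    fix k assume k: "k \<in> JI_below A m"
    then obtain d where d: "d \<in> JI_below A k" "d \<in> D"
      using dense unfolding dense_below_def by blast
    have "d \<in> JI_below A m"
      using JI_below_mono[OF assms(2) k] d(1) by blast
    then obtain e where e: "e \<in> JI_below A d" "e \<in> E"
      using dense unfolding dense_below_def by blast
    have "e \<in> JI_below A k" "e \<in> D"
      using e(1) d JI_below_mono[OF JI_below_subset_car[THEN subsetD, OF k]]
        JI_below_subset_downset[OF assms(1)] by blast+
    then show "JI_below A k \<inter> (D \<inter> E) \<noteq> {}"
      using e(2) by blast
  qed
qed (auto simp: dense_below_def)

lemma ng_plus_iff_not_dense:
  assumes "D \<in> downsets A" "k \<in> JI A"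
  shows "k \<in> ng (plus A) D \<longleftrightarrow> (\<forall>m\<in>JI_below A k. \<not> dense_below D m)"
proof
  assume "k \<in> ng (plus A) D"
  then have "D \<inter> JI_below A k = {}"
    unfolding ng_plus by blast
  then show "\<forall>m\<in>JI_below A k. \<not> dense_below D m"
    using JI_below_mono[OF JI_in_car[OF assms(2)]] JI_below_refl
    unfolding dense_below_def JI_below_def by blast
next
  assume not_dense: "\<forall>m\<in>JI_below A k. \<not> dense_below D m"
  have "dense_below D b" if "b \<in> D" for b
    using JI_below_refl JI_below_subset_downset[OF assms(1) that]
    unfolding dense_below_def JI_below_def by blast
  then show "k \<in> ng (plus A) D"
    using not_dense assms(2) unfolding ng_plus by blast
qed

definition agree_at :: "'a \<Rightarrow> 'a set \<Rightarrow> 'a set \<Rightarrow> bool" where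
  "agree_at j D E \<longleftrightarrow>
     (j \<in> D \<longleftrightarrow> j \<in> E) \<and> (\<forall>m\<in>JI_below A j. dense_below D m \<longleftrightarrow> dense_below E m)"

lemma agree_at_Int:
  assumes "D \<in> downsets A" "D' \<in> downsets A" "agree_at j D D'" "agree_at j E E'"
  shows "agree_at j (D \<inter> E) (D' \<inter> E')"
  using assms dense_below_Int JI_below_subset_car unfolding agree_at_def by blast

lemma agree_at_ng_plus:
  assumes "D \<in> downsets A" "D' \<in> downsets A" "j \<in> JI A" "agree_at j D D'"
  shows "agree_at j (ng (plus A) D) (ng (plus A) D')"
proof -
  have below_j: "k \<in> ng (plus A) D \<longleftrightarrow> k \<in> ng (plus A) D'" if "k \<in> JI_below A j" for k
  proof -
    have "JI_below A k \<subseteq> JI_below A j"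
      using JI_below_mono[OF JI_in_car[OF assms(3)] that] .
    then show ?thesis
      using that assms(4) ng_plus_iff_not_dense[OF assms(1)] ng_plus_iff_not_dense[OF assms(2)]
      unfolding agree_at_def JI_below_def by blast
  qed
  moreover have "dense_below (ng (plus A) D) m \<longleftrightarrow> dense_below (ng (plus A) D') m"
    if "m \<in> JI_below A j" for m
    using that below_j JI_below_mono[OF JI_in_car[OF assms(3)]] JI_below_subset_car
    by (intro dense_below_cong) blast+
  ultimately show ?thesis
    using JI_below_refl[OF assms(3)] unfolding agree_at_def by blast
qed

lemma eval_plus_agree_at:
  assumes "in_psl_lang t" "j \<in> JI A"
    and "\<forall>x. V x \<in> downsets A" "\<forall>x. V' x \<in> downsets A" "\<forall>x. agree_at j (V x) (V' x)"
  shows "agree_at j (eval (plus A) V t) (eval (plus A) V' t)"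
  using assms(1)
proof (induction t)
  case (Meet t1 t2)
  then show ?case
    using agree_at_Int eval_plus_in_downsets assms(3,4) by simp
next
  case (Neg t)
  then show ?case
    using agree_at_ng_plus eval_plus_in_downsets assms(2-4) by simp
qed (use assms(5) in \<open>simp_all add: agree_at_def\<close>)

end

locale finite_psl_algebra = psl_algebra +
  assumes finite_car: "finite (car A)"
begin

lemma lub_exists:
  assumes "S \<subseteq> car A"
  shows "\<exists>m. is_lub A S m"
proof -
  define U where "U = {u \<in> car A. \<forall>s\<in>S. le A s u}"
  have "finite U" "U \<subseteq> car A"
    using finite_car unfolding U_def by auto
  then obtain m where "m \<in> car A" "\<forall>u\<in>U. le A m u"
    "\<forall>u\<in>car A. (\<forall>s\<in>U. le A u s) \<longrightarrow> le A u m"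
    using finite_glb_exists by blast
  then show ?thesis
    using assms unfolding is_lub_def U_def by blast
qed

lemma JI_strict_upper_bound:
  assumes "j \<in> JI A" "S \<subseteq> car A" "\<forall>s\<in>S. le A s j \<and> s \<noteq> j"
  shows "\<exists>w\<in>car A. le A w j \<and> w \<noteq> j \<and> (\<forall>s\<in>S. le A s w)"
proof -
  have "finite S"
    using finite_subset[OF assms(2) finite_car] .
  then show ?thesis
    using assms(2,3)
  proof (induction S rule: finite_induct)
    case empty
    show ?case
      using zr_closed zr_le JI_in_car[OF assms(1)] zr_notin_JI assms(1) by auto
  next
    case (insert a S)
    then obtain w where w: "w \<in> car A" "le A w j" "w \<noteq> j" "\<forall>s\<in>S. le A s w"
      by auto
    have a: "a \<in> car A" "le A a j" "a \<noteq> j"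
      using insert.prems by auto
    have "\<exists>c. is_join A a w c"
      unfolding is_join_iff_is_lub using lub_exists a(1) w(1) by simp
    then obtain c where c: "is_join A a w c" ..
    have "le A c j"
      using c a w JI_in_car[OF assms(1)] unfolding is_join_def by blast
    moreover have "c \<noteq> j"
      using c assms(1) a w unfolding JI_def join_irr_def by blast
    moreover have "\<forall>s\<in>insert a S. le A s c"
      using c w insert.prems psl_le_trans unfolding is_join_def by blast
    ultimately show ?case
      using c unfolding is_join_def by blast
  qed
qed

text \<open>An element of least height among the nonzero elements below \<open>c\<close> is join irreducible.\<close>

lemma JI_below_nonempty:
  assumes "c \<in> car A" "c \<noteq> zr A"
  shows "JI_below A c \<noteq> {}"
proof -
  define height where "height a = card {u \<in> car A. le A u a}" for a
  obtain m where m: "m \<in> car A" "m \<noteq> zr A" "le A m c"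
    and least: "\<And>d. d \<in> car A \<and> d \<noteq> zr A \<and> le A d c \<Longrightarrow> height m \<le> height d"
    using ex_has_least_nat[of "\<lambda>d. d \<in> car A \<and> d \<noteq> zr A \<and> le A d c" c height]
      assms psl_le_refl by blast
  have below_m: "d = zr A" if d: "d \<in> car A" "le A d m" "d \<noteq> m" for d
  proof (rule ccontr)
    assume "d \<noteq> zr A"
    have "{u \<in> car A. le A u d} \<subset> {u \<in> car A. le A u m}"
      using d m(1) psl_le_trans psl_le_antisym psl_le_refl by blast
    then have "height d < height m"
      unfolding height_def using finite_car by (simp add: psubset_card_mono)
    moreover have "height m \<le> height d"
      using least d \<open>d \<noteq> zr A\<close> m psl_le_trans assms(1) by blast
    ultimately show False
      by simp
  qed
  have "m \<in> JI A"
    unfolding JI_def join_irr_def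
  proof (intro CollectI conjI m ballI impI)
    fix b d assume bd: "b \<in> car A" "d \<in> car A" "is_join A b d m"
    show "m = b \<or> m = d"
    proof (rule ccontr)
      assume "\<not> (m = b \<or> m = d)"
      then have "b = zr A" "d = zr A"
        using below_m bd unfolding is_join_def by auto
      then have "le A m (zr A)"
        using bd(3) zr_closed psl_le_refl unfolding is_join_def by auto
      then show False
        using le_zr_iff m by blast
    qed
  qed
  then show ?thesis
    using m(3) unfolding JI_below_def by blast
qed

lemma mt_eq_zr_iff_JI_below_disjoint:
  "a \<in> car A \<Longrightarrow> b \<in> car A \<Longrightarrow> mt A a b = zr A \<longleftrightarrow> JI_below A a \<inter> JI_below A b = {}"
  using JI_below_nonempty JI_below_zr JI_below_mt mt_closed by metis

lemma JI_below_ng: "a \<in> car A \<Longrightarrow> JI_below A (ng A a) = ng (plus A) (JI_below A a)"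
  using mt_eq_zr_iff_le_ng mt_eq_zr_iff_JI_below_disjoint JI_in_car[of _ A]
  unfolding ng_plus JI_below_def by blast

lemma eval_plus_JI_below:
  "in_psl_lang t \<Longrightarrow> \<forall>x. v x \<in> car A \<Longrightarrow>
     eval (plus A) (\<lambda>x. JI_below A (v x)) t = JI_below A (eval A v t)"
  by (induction t) (simp_all add: JI_below_mt JI_below_ng JI_below_zr JI_below_on eval_closed)

lemma agree_at_JI_below_self:
  assumes "D \<in> downsets A" "j \<in> D"
  shows "agree_at j D (JI_below A j)"
proof -
  have j: "j \<in> JI A"
    using assms downsets_subset_JI by blast
  have "JI_below A j \<subseteq> D"
    using JI_below_subset_downset[OF assms] .
  then have "dense_below D m \<longleftrightarrow> dense_below (JI_below A j) m" if "m \<in> JI_below A j" for m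
    using that JI_below_mono[OF JI_in_car[OF j] that] JI_below_subset_car
    by (intro dense_below_cong) blast+
  then show ?thesis
    using assms(2) JI_below_refl[OF j] unfolding agree_at_def by blast
qed

text \<open>The join \<open>a\<close> lies strictly below \<open>j\<close> because \<open>j\<close> is join irreducible. If no join
  irreducible below \<open>k\<close> lies in \<open>D\<close>, then all of \<open>D\<close>, hence \<open>a\<close>, lies below \<open>ng A k\<close>,
  so no join irreducible lies below both \<open>a\<close> and \<open>k\<close>.\<close>

lemma agree_at_JI_below_lub:
  assumes D: "D \<in> downsets A" and j: "j \<in> JI A" "j \<notin> D"
    and a: "is_lub A (D \<inter> JI_below A j) a"
  shows "agree_at j D (JI_below A a)"
proof -
  have a_car: "a \<in> car A" and D_le_a: "\<And>d. d \<in> D \<Longrightarrow> d \<in> JI_below A j \<Longrightarrow> le A d a"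
    using a unfolding is_lub_def by auto
  obtain w where w: "w \<in> car A" "le A w j" "w \<noteq> j" "\<forall>s\<in>D \<inter> JI_below A j. le A s w"
    using JI_strict_upper_bound[OF j(1), of "D \<inter> JI_below A j"] j(2) JI_below_subset_car
    unfolding JI_below_def by blast
  have "\<not> le A j a"
    using a w psl_le_trans[OF JI_in_car[OF j(1)] a_car w(1)] psl_le_antisym[OF w(1) JI_in_car[OF j(1)]]
    unfolding is_lub_def by blast
  then have j_notin_a: "j \<notin> JI_below A a"
    unfolding JI_below_def by blast
  have "dense_below D m \<longleftrightarrow> dense_below (JI_below A a) m" if m: "m \<in> JI_below A j" for m
  proof
    assume dense_D: "dense_below D m"
    show "dense_below (JI_below A a) m"
      unfolding dense_below_def
    proof
      fix k assume k: "k \<in> JI_below A m"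
      then obtain d where d: "d \<in> JI_below A k" "d \<in> D"
        using dense_D unfolding dense_below_def by blast
      have "JI_below A k \<subseteq> JI_below A j"
        using JI_below_mono[OF JI_in_car[OF j(1)] m] JI_below_mono[OF _ k] JI_below_subset_car m
        by blast
      then have "d \<in> JI_below A a"
        using d D_le_a unfolding JI_below_def by blast
      then show "JI_below A k \<inter> JI_below A a \<noteq> {}"
        using d(1) by blast
    qed
  next
    assume dense_a: "dense_below (JI_below A a) m"
    show "dense_below D m"
      unfolding dense_below_def
    proof (rule ballI, rule ccontr)
      fix k assume k: "k \<in> JI_below A m" and disjoint: "\<not> JI_below A k \<inter> D \<noteq> {}"
      have k_car: "k \<in> car A"
        using k JI_below_subset_car by blast
      have "d \<in> JI_below A (ng A k)" if "d \<in> D" for d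
      proof -
        have "JI_below A k \<inter> JI_below A d = {}"
          using disjoint JI_below_subset_downset[OF D that] by blast
        then show ?thesis
          unfolding JI_below_ng[OF k_car] ng_plus using that downsets_subset_JI[OF D] by blast
      qed
      then have "le A a (ng A k)"
        using a ng_closed[OF k_car] unfolding is_lub_def JI_below_def by blast
      then have "JI_below A a \<subseteq> JI_below A (ng A k)"
        using JI_below_mono_le[OF a_car ng_closed[OF k_car]] by blast
      moreover have "JI_below A (ng A k) \<inter> JI_below A k = {}"
        unfolding JI_below_ng[OF k_car] ng_plus using JI_below_refl by blast
      ultimately show False
        using dense_a k unfolding dense_below_def by blast
    qed
  qed
  then show ?thesis
    using j(2) j_notin_a unfolding agree_at_def by blast
qed

lemma exists_agree_at_JI_below:
  assumes "D \<in> downsets A" "j \<in> JI A"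
  shows "\<exists>a\<in>car A. agree_at j D (JI_below A a)"
proof (cases "j \<in> D")
  case True
  then show ?thesis
    using agree_at_JI_below_self[OF assms(1)] JI_in_car[OF assms(2)] by blast
next
  case False
  obtain a where "is_lub A (D \<inter> JI_below A j) a"
    using lub_exists JI_below_subset_car by blast
  then show ?thesis
    using agree_at_JI_below_lub[OF assms False] unfolding is_lub_def by blast
qed

lemma validates_JI_le_premise:
  assumes "validates A phis y z" "y \<noteq> z"
    and "\<forall>f\<in>set phis. in_psl_lang f \<and> y \<notin> vars f \<and> z \<notin> vars f"
    and v: "\<forall>x. v x \<in> car A" and j: "j \<in> JI A"
  shows "\<exists>f\<in>set phis. le A j (eval A v f)"
proof (rule ccontr)
  assume no_premise: "\<not> ?thesis"
  define S where "S = (\<lambda>f. mt A (eval A v f) j) ` set phis"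
  have S_car: "S \<subseteq> car A"
    unfolding S_def using assms(3) eval_closed[OF _ v] mt_closed JI_in_car[OF j] by auto
  have "\<forall>s\<in>S. le A s j \<and> s \<noteq> j"
    unfolding S_def using no_premise assms(3) eval_closed[OF _ v] JI_in_car[OF j]
      mt_le_right mt_eq_right_iff by auto
  then obtain w where w: "w \<in> car A" "le A w j" "w \<noteq> j"
    "\<forall>f\<in>set phis. le A (mt A (eval A v f) j) w"
    using JI_strict_upper_bound[OF j S_car] unfolding S_def by auto
  define u where "u = v(y := j, z := w)"
  have u_car: "\<forall>x. u x \<in> car A"
    using v w(1) JI_in_car[OF j] by (simp add: u_def)
  have "eval A u f = eval A v f" if "f \<in> set phis" for f
    using that assms(3) by (intro eval_cong) (auto simp: u_def)
  then have "\<forall>f\<in>set phis. le A (mt A (eval A u f) (u y)) (u z)"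
    using w(4) assms(2) by (simp add: u_def)
  then have "le A (u y) (u z)"
    using assms(1) u_car unfolding validates_def by blast
  then show False
    using assms(2) psl_le_antisym[OF JI_in_car[OF j] w(1)] w(2,3) unfolding u_def by auto
qed

lemma validates_plus:
  assumes "validates A phis y z" "y \<noteq> z"
    and phis: "\<forall>f\<in>set phis. in_psl_lang f \<and> y \<notin> vars f \<and> z \<notin> vars f"
  shows "validates (plus A) phis y z"
  unfolding validates_def le_plus_iff plus_simps
proof (intro allI impI subsetI)
  fix V j assume V: "\<forall>x. V x \<in> downsets A"
    and prem: "\<forall>f\<in>set phis. eval (plus A) V f \<inter> V y \<subseteq> V z" and "j \<in> V y"
  have j: "j \<in> JI A"
    using V \<open>j \<in> V y\<close> downsets_subset_JI by blast
  have "\<forall>x. \<exists>a. a \<in> car A \<and> agree_at j (V x) (JI_below A a)"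
    using exists_agree_at_JI_below[OF _ j] V by blast
  then obtain v where v: "\<forall>x. v x \<in> car A" "\<forall>x. agree_at j (V x) (JI_below A (v x))"
    using choice[of "\<lambda>x a. a \<in> car A \<and> agree_at j (V x) (JI_below A a)"] by blast
  obtain f where f: "f \<in> set phis" "le A j (eval A v f)"
    using validates_JI_le_premise[OF assms v(1) j] by blast
  have "agree_at j (eval (plus A) V f) (JI_below A (eval A v f))"
    using eval_plus_agree_at[OF _ j V _ v(2)] eval_plus_JI_below[OF _ v(1)]
      JI_below_in_downsets v(1) phis f(1) by fastforce
  then have "j \<in> eval (plus A) V f"
    using f(2) j unfolding agree_at_def JI_below_def by blast
  then show "j \<in> V z"
    using prem f(1) \<open>j \<in> V y\<close> by blast
qed

end

theorem proposition5p11: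
  fixes A :: "'a psl_alg" and phis :: "fm list" and y z :: nat
  assumes "psl A" and "finite (car A)"
    and "sahlqvist_qe phis y z" and "qe_in_psl_lang phis"
    and "validates A phis y z"
  shows "validates (plus A) phis y z"
proof -
  interpret finite_psl_algebra A
    using assms(1,2) by unfold_locales
  have "y \<noteq> z" "\<forall>f\<in>set phis. in_psl_lang f \<and> y \<notin> vars f \<and> z \<notin> vars f"
    using assms(3,4) unfolding sahlqvist_qe_def qe_in_psl_lang_def by auto
  then show ?thesis
    using validates_plus[OF assms(5)] by blast
qed

end
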